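(* Let $\Phi_U$ be a pmf on a countable $\mathcal U$, $\Phi_{V|U}$ a channel to a countable $\mathcal V$, and $Q_V=\Phi_V=\sum_u\Phi_U\Phi_{V|U}$. Let $u(1),\dots,u(M)$ be drawn independently from $\Phi_U$ and let $P_V(v)=\frac1M\sum_{j=1}^M\Phi_{V|U}(v|u(j))$. Then for every $\tau$, $$\mathbf E\|P_V-Q_V\|_{TV}\le\mathbf P_\Phi(\mathcal A'^c_\tau)+\delta'_\Phi(\tau),$$ where $\mathcal A'_\tau=\{(u,v):i_\Phi(u;v)\le\tau\}$ and $$\delta'_\Phi(\tau)=\frac{1}{2\sqrt M}\mathbf E_{\Phi_V}\sqrt{\mathbf E_{\Phi_{U|V}}\,2^{\,i_\Phi(U;V)}\mathbf 1_{\mathcal A'_\tau}(U,V)}\le\frac12\sqrt{\frac{2^\tau}{M}}.$$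
   Context: Expectation on the left is over the random codebook. $i_\Phi(u;v)=\log\frac{\Phi_{U,V}(u,v)}{\Phi_U(u)\Phi_V(v)}$, base-2 logarithm. Total variation is half the $\ell_1$ distance. *)

theory Defs
  imports "HOL-Probability.Probability"
begin

definition out_pmf :: "'u pmf \<Rightarrow> ('u \<Rightarrow> 'v pmf) \<Rightarrow> 'v pmf" where
  "out_pmf PU W = bind_pmf PU W"

definition joint_pmf :: "'u pmf \<Rightarrow> ('u \<Rightarrow> 'v pmf) \<Rightarrow> ('u \<times> 'v) pmf" where
  "joint_pmf PU W = bind_pmf PU (\<lambda>u. map_pmf (\<lambda>v. (u, v)) (W u))"

definition info_dens :: "'u pmf \<Rightarrow> ('u \<Rightarrow> 'v pmf) \<Rightarrow> 'u \<Rightarrow> 'v \<Rightarrow> real" where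
  "info_dens PU W u v =
     log 2 (pmf (joint_pmf PU W) (u, v) / (pmf PU u * pmf (out_pmf PU W) v))"

definition tv_dist :: "('v \<Rightarrow> real) \<Rightarrow> ('v \<Rightarrow> real) \<Rightarrow> real" where
  "tv_dist p q = (1/2) * (\<Sum>\<^sub>\<infinity> v. \<bar>p v - q v\<bar>)"

definition A_tau :: "'u pmf \<Rightarrow> ('u \<Rightarrow> 'v pmf) \<Rightarrow> real \<Rightarrow> ('u \<times> 'v) set" where
  "A_tau PU W \<tau> = {(u, v). info_dens PU W u v \<le> \<tau>}"

definition cond_term :: "'u pmf \<Rightarrow> ('u \<Rightarrow> 'v pmf) \<Rightarrow> real \<Rightarrow> 'v \<Rightarrow> real" where
  "cond_term PU W \<tau> v =
     (\<Sum>\<^sub>\<infinity> u. (pmf (joint_pmf PU W) (u, v) / pmf (out_pmf PU W) v)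
        * 2 powr (info_dens PU W u v) * indicator (A_tau PU W \<tau>) (u, v))"

definition delta' :: "'u pmf \<Rightarrow> ('u \<Rightarrow> 'v pmf) \<Rightarrow> nat \<Rightarrow> real \<Rightarrow> real" where
  "delta' PU W M \<tau> =
     1 / (2 * sqrt (real M)) *
       measure_pmf.expectation (out_pmf PU W) (\<lambda>v. sqrt (cond_term PU W \<tau> v))"

definition codebook_pmf :: "'u pmf \<Rightarrow> nat \<Rightarrow> (nat \<Rightarrow> 'u) pmf" where
  "codebook_pmf PU M = Pi_pmf {..<M} undefined (\<lambda>_. PU)"

definition induced_out :: "('u \<Rightarrow> 'v pmf) \<Rightarrow> nat \<Rightarrow> (nat \<Rightarrow> 'u) \<Rightarrow> 'v \<Rightarrow> real" where
  "induced_out W M c v = (1 / real M) * (\<Sum>j<M. pmf (W (c j)) v)"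

end

theory Submission
  imports Defs
begin

(* For a fixed output v, P_V(v) is the empirical mean of the statistic u |-> W(v|u) over M
   i.i.d. codewords, and its mean is Q_V(v) = Phi_V(v).  Split the statistic along the set
   A'_tau = {i(u;v) <= tau}: the part inside A'_tau is handled by the variance of an empirical
   mean, E|X - E X| <= sqrt (Var X) = sqrt (Var a / M), and its second moment equals
   Phi_V(v)^2 E_{Phi_{U|V=v}} 2^{i(U;v)} 1_{A'_tau}; the part outside A'_tau is bounded by the
   triangle inequality.  Summing over v (Tonelli) gives 2 delta'(tau) + 2 Phi_{UV}(A'^c_tau). *)

lemma integrable_pmf_bounded:
  fixes f :: "'a \<Rightarrow> real"
  assumes "\<And>x. \<bar>f x\<bar> \<le> B"
  shows "integrable (measure_pmf p) f"
  by (rule measure_pmf.integrable_const_bound[where B = B]) (use assms in auto)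

(* E|X| <= sqrt (E X^2): the variance of |X| is nonnegative. *)
lemma expectation_abs_le_sqrt_second_moment:
  fixes X :: "'a \<Rightarrow> real"
  assumes "integrable (measure_pmf p) X" "integrable (measure_pmf p) (\<lambda>x. (X x)\<^sup>2)"
  shows "measure_pmf.expectation p (\<lambda>x. \<bar>X x\<bar>) \<le> sqrt (measure_pmf.expectation p (\<lambda>x. (X x)\<^sup>2))"
proof (rule real_le_rsqrt)
  have "0 \<le> measure_pmf.variance p (\<lambda>x. \<bar>X x\<bar>)"
    by (rule measure_pmf.variance_positive)
  also have "\<dots> = measure_pmf.expectation p (\<lambda>x. (X x)\<^sup>2) - (measure_pmf.expectation p (\<lambda>x. \<bar>X x\<bar>))\<^sup>2"
    using assms by (subst measure_pmf.variance_eq) auto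
  finally show "(measure_pmf.expectation p (\<lambda>x. \<bar>X x\<bar>))\<^sup>2 \<le> measure_pmf.expectation p (\<lambda>x. (X x)\<^sup>2)"
    by simp
qed

(* This is the bridge between the infinite sums of the
   statement and Tonelli's theorem for nonnegative integrals. *)
lemma has_sum_nonneg_iff_nn_integral:
  fixes f :: "'a \<Rightarrow> real"
  assumes nonneg: "\<And>x. 0 \<le> f x"
  shows "(f has_sum B) UNIV \<longleftrightarrow> (\<integral>\<^sup>+x. ennreal (f x) \<partial>count_space UNIV) = ennreal B \<and> 0 \<le> B"
proof
  assume sum: "(f has_sum B) UNIV"
  hence "Infinite_Sum.abs_summable_on f UNIV"
    using summable_on_iff_abs_summable_on_real by (blast intro: has_sum_imp_summable)
  hence abs: "integrable (count_space UNIV) f"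
    using abs_summable_equivalent abs_summable_on_def by blast
  have "(\<integral>\<^sup>+x. ennreal (f x) \<partial>count_space UNIV) = ennreal (infsetsum f UNIV)"
    using abs nonneg unfolding infsetsum_def by (subst nn_integral_eq_integral) auto
  also have "infsetsum f UNIV = B"
    using sum infsetsum_infsum[OF abs[folded abs_summable_on_def]] by (simp add: infsumI)
  finally show "(\<integral>\<^sup>+x. ennreal (f x) \<partial>count_space UNIV) = ennreal B \<and> 0 \<le> B"
    using has_sum_nonneg[OF sum] nonneg by blast
next
  assume nn: "(\<integral>\<^sup>+x. ennreal (f x) \<partial>count_space UNIV) = ennreal B \<and> 0 \<le> B"
  hence abs: "integrable (count_space UNIV) f"
    using nonneg by (intro integrableI_bounded) auto
  have "infsetsum f UNIV = B"
    using nn nonneg by (subst infsetsum_conv_nn_integral) auto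
  moreover have "f summable_on UNIV"
    using abs abs_summable_equivalent abs_summable_summable abs_summable_on_def by blast
  ultimately show "(f has_sum B) UNIV"
    using infsetsum_infsum[OF abs[folded abs_summable_on_def]] by (metis has_sum_infsum)
qed

lemma has_sum_pmf_expectation:
  fixes f :: "'a \<Rightarrow> real"
  assumes "integrable (measure_pmf p) f"
  shows "((\<lambda>x. pmf p x * f x) has_sum measure_pmf.expectation p f) UNIV"
proof -
  have abs: "integrable (count_space UNIV) (\<lambda>x. pmf p x * f x)"
    using assms unfolding measure_pmf_eq_density by (simp add: integrable_density)
  hence "(\<lambda>x. pmf p x * f x) summable_on UNIV"
    using abs abs_summable_equivalent abs_summable_summable abs_summable_on_def by blast
  thus ?thesis
    using infsetsum_infsum[OF abs[folded abs_summable_on_def]] pmf_expectation_eq_infsetsum[of p f] by (metis has_sum_infsum)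
qed

(* A nonnegative infinite sum never exceeds the counting integral (it is 0 if divergent). *)
lemma infsum_nonneg_le_nn_integral:
  fixes f :: "'a \<Rightarrow> real"
  assumes "\<And>x. 0 \<le> f x"
  shows "ennreal (\<Sum>\<^sub>\<infinity>x. f x) \<le> (\<integral>\<^sup>+x. ennreal (f x) \<partial>count_space UNIV)"
proof (cases "f summable_on UNIV")
  case True
  hence "(f has_sum (\<Sum>\<^sub>\<infinity>x. f x)) UNIV" by (rule has_sum_infsum)
  thus ?thesis using assms by (simp add: has_sum_nonneg_iff_nn_integral)
next
  case False
  thus ?thesis by (simp add: infsum_not_exists)
qed

lemma expectation_infsum_le:
  fixes g :: "'c \<Rightarrow> 'v::countable \<Rightarrow> real"
  assumes nonneg: "\<And>c v. 0 \<le> g c v"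
    and integrable: "\<And>v. integrable (measure_pmf C) (\<lambda>c. g c v)"
    and bound: "\<And>v. measure_pmf.expectation C (\<lambda>c. g c v) \<le> h v"
    and sum: "(h has_sum B) UNIV"
  shows "measure_pmf.expectation C (\<lambda>c. \<Sum>\<^sub>\<infinity>v. g c v) \<le> B"
proof -
  have h_nonneg: "0 \<le> h v" for v
    using bound[of v] nonneg by (meson Bochner_Integration.integral_nonneg order.trans)
  have "(\<integral>\<^sup>+c. ennreal (\<Sum>\<^sub>\<infinity>v. g c v) \<partial>C)
        \<le> (\<integral>\<^sup>+c. \<integral>\<^sup>+v. ennreal (g c v) \<partial>count_space UNIV \<partial>C)"
    using nonneg by (intro nn_integral_mono infsum_nonneg_le_nn_integral)
  also have "\<dots> = (\<integral>\<^sup>+v. \<integral>\<^sup>+c. ennreal (g c v) \<partial>C \<partial>count_space UNIV)"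
    by (rule nn_integral_count_space_nn_integral) auto
  also have "\<dots> = (\<integral>\<^sup>+v. ennreal (measure_pmf.expectation C (\<lambda>c. g c v)) \<partial>count_space UNIV)"
    using integrable nonneg by (intro nn_integral_cong nn_integral_eq_integral) auto
  also have "\<dots> \<le> (\<integral>\<^sup>+v. ennreal (h v) \<partial>count_space UNIV)"
    using bound by (intro nn_integral_mono ennreal_leI)
  also have "\<dots> = ennreal B"
    using sum h_nonneg by (simp add: has_sum_nonneg_iff_nn_integral)
  finally have "enn2real (\<integral>\<^sup>+c. ennreal (\<Sum>\<^sub>\<infinity>v. g c v) \<partial>C) \<le> B"
    using has_sum_nonneg[OF sum] h_nonneg by (intro enn2real_leI) auto
  thus ?thesis
    using nonneg by (subst integral_eq_nn_integral) (auto intro: infsum_nonneg)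
qed

definition empirical_mean :: "nat \<Rightarrow> ('u \<Rightarrow> real) \<Rightarrow> (nat \<Rightarrow> 'u) \<Rightarrow> real" where
  "empirical_mean M a c = (1 / real M) * (\<Sum>j<M. a (c j))"

lemma empirical_mean_add:
  "empirical_mean M (\<lambda>u. a u + b u) c = empirical_mean M a c + empirical_mean M b c"
  by (simp add: empirical_mean_def sum.distrib distrib_left)

lemma empirical_mean_bounded:
  assumes "M \<ge> 1" "\<And>u. \<bar>a u\<bar> \<le> B"
  shows "\<bar>empirical_mean M a c\<bar> \<le> B"
proof -
  have "\<bar>\<Sum>j<M. a (c j)\<bar> \<le> (\<Sum>j<M. B)"
    using assms(2) by (intro order.trans[OF sum_abs sum_mono]) auto
  thus ?thesis
    using assms(1) by (simp add: empirical_mean_def abs_mult field_simps)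
qed

lemma codeword_distribution:
  assumes "j < M"
  shows "map_pmf (\<lambda>c. c j) (codebook_pmf PU M) = PU"
  using assms unfolding codebook_pmf_def by (subst Pi_pmf_component) auto

lemma integrable_codeword:
  fixes f :: "'u \<Rightarrow> real"
  assumes "j < M" "integrable (measure_pmf PU) f"
  shows "integrable (measure_pmf (codebook_pmf PU M)) (\<lambda>c. f (c j))"
  using assms integrable_map_pmf_eq[of "\<lambda>c. c j" "codebook_pmf PU M" f]
  by (simp add: codeword_distribution)

lemma expectation_codeword:
  fixes f :: "'u \<Rightarrow> real"
  assumes "j < M"
  shows "measure_pmf.expectation (codebook_pmf PU M) (\<lambda>c. f (c j)) = measure_pmf.expectation PU f"
  using integral_map_pmf[of "\<lambda>c. c j" "codebook_pmf PU M" f]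
  by (simp add: codeword_distribution[OF assms])

lemma expectation_two_codewords:
  fixes f g :: "'u \<Rightarrow> real"
  assumes "i < M" "j < M" "i \<noteq> j"
    and "integrable (measure_pmf PU) f" "integrable (measure_pmf PU) g"
    and "\<And>u. 0 \<le> f u" "\<And>u. 0 \<le> g u"
  shows "measure_pmf.expectation (codebook_pmf PU M) (\<lambda>c. f (c i) * g (c j))
         = measure_pmf.expectation PU f * measure_pmf.expectation PU g"
proof -
  define h where "h = (\<lambda>k. if k = i then f else if k = j then g else (\<lambda>_. 1))"
  have factors: "(\<Prod>k<M. h k (c k)) = f (c i) * g (c j)" for c
  proof -
    have "(\<Prod>k<M. h k (c k)) = (\<Prod>k\<in>{i, j}. h k (c k))"
      using assms(1-3) by (intro prod.mono_neutral_right) (auto simp: h_def)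
    thus ?thesis using assms(3) by (simp add: h_def)
  qed
  have "measure_pmf.expectation (codebook_pmf PU M) (\<lambda>c. \<Prod>k<M. h k (c k))
        = (\<Prod>k<M. measure_pmf.expectation PU (h k))"
    unfolding codebook_pmf_def using assms(4-7)
    by (intro expectation_prod_Pi_pmf) (auto simp: h_def)
  also have "\<dots> = (\<Prod>k\<in>{i, j}. measure_pmf.expectation PU (h k))"
    using assms(1-3) by (intro prod.mono_neutral_right) (auto simp: h_def)
  finally show ?thesis unfolding factors using assms(3) by (simp add: h_def)
qed

lemma expectation_empirical_mean:
  fixes a :: "'u \<Rightarrow> real"
  assumes "M \<ge> 1" "integrable (measure_pmf PU) a"
  shows "measure_pmf.expectation (codebook_pmf PU M) (empirical_mean M a) = measure_pmf.expectation PU a"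
proof -
  have "measure_pmf.expectation (codebook_pmf PU M) (empirical_mean M a)
        = (1 / real M) * (\<Sum>j<M. measure_pmf.expectation (codebook_pmf PU M) (\<lambda>c. a (c j)))"
    unfolding empirical_mean_def using assms(2)
    by (simp add: Bochner_Integration.integral_sum integrable_codeword)
  also have "\<dots> = measure_pmf.expectation PU a"
    using assms(1) by (simp add: expectation_codeword)
  finally show ?thesis .
qed

(* Second moment of the empirical mean: the M diagonal terms contribute E a^2, the M(M-1)
   off-diagonal terms contribute (E a)^2 by independence. *)
lemma second_moment_empirical_mean:
  fixes a :: "'u \<Rightarrow> real"
  assumes "M \<ge> 1" "\<And>u. 0 \<le> a u" "\<And>u. a u \<le> B"
  shows "measure_pmf.expectation (codebook_pmf PU M) (\<lambda>c. (empirical_mean M a c)\<^sup>2)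
         = (measure_pmf.expectation PU (\<lambda>u. (a u)\<^sup>2)
            + (real M - 1) * (measure_pmf.expectation PU a)\<^sup>2) / real M"
proof -
  define C where "C = codebook_pmf PU M"
  define \<mu> where "\<mu> = measure_pmf.expectation PU a"
  define s where "s = measure_pmf.expectation PU (\<lambda>u. (a u)\<^sup>2)"
  have bounded: "\<bar>a u\<bar> \<le> B" for u
    using assms(2,3) by (simp add: abs_of_nonneg)
  have int_a: "integrable (measure_pmf PU) a"
    using bounded by (rule integrable_pmf_bounded)
  have int_pair: "integrable (measure_pmf C) (\<lambda>c. a (c i) * a (c j))" for i j
    using bounded by (intro integrable_pmf_bounded[where B = "B * B"]) (simp add: abs_mult mult_mono')
  have row: "(\<Sum>j<M. measure_pmf.expectation C (\<lambda>c. a (c i) * a (c j))) = s + (real M - 1) * \<mu>\<^sup>2"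
    if i: "i < M" for i
  proof -
    have "(\<Sum>j<M. measure_pmf.expectation C (\<lambda>c. a (c i) * a (c j)))
          = measure_pmf.expectation C (\<lambda>c. a (c i) * a (c i))
            + (\<Sum>j\<in>{..<M} - {i}. measure_pmf.expectation C (\<lambda>c. a (c i) * a (c j)))"
      using i by (subst sum.remove[of _ i]) auto
    also have "measure_pmf.expectation C (\<lambda>c. a (c i) * a (c i)) = s"
      unfolding C_def s_def using expectation_codeword[OF i, of PU "\<lambda>u. a u * a u"]
      by (simp add: power2_eq_square)
    also have "(\<Sum>j\<in>{..<M} - {i}. measure_pmf.expectation C (\<lambda>c. a (c i) * a (c j)))
               = (\<Sum>j\<in>{..<M} - {i}. \<mu>\<^sup>2)"
      unfolding C_def \<mu>_def using i int_a assms(2)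
      by (intro sum.cong) (auto simp: expectation_two_codewords power2_eq_square)
    also have "\<dots> = (real M - 1) * \<mu>\<^sup>2"
      using i by simp
    finally show ?thesis .
  qed
  have "(empirical_mean M a c)\<^sup>2 = (1 / real M)\<^sup>2 * (\<Sum>i<M. \<Sum>j<M. a (c i) * a (c j))" for c
    unfolding empirical_mean_def by (simp add: power2_eq_square sum_product)
  hence "measure_pmf.expectation C (\<lambda>c. (empirical_mean M a c)\<^sup>2)
         = (1 / real M)\<^sup>2 * (\<Sum>i<M. \<Sum>j<M. measure_pmf.expectation C (\<lambda>c. a (c i) * a (c j)))"
    by (simp add: Bochner_Integration.integral_sum int_pair integrable_sum)
  also have "\<dots> = (1 / real M)\<^sup>2 * (real M * (s + (real M - 1) * \<mu>\<^sup>2))"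
    using row by simp
  also have "\<dots> = (s + (real M - 1) * \<mu>\<^sup>2) / real M"
    using assms(1) by (simp add: power2_eq_square)
  finally show ?thesis unfolding C_def s_def \<mu>_def .
qed

lemma variance_empirical_mean:
  fixes a :: "'u \<Rightarrow> real"
  assumes "M \<ge> 1" "\<And>u. 0 \<le> a u" "\<And>u. a u \<le> B"
  shows "measure_pmf.expectation (codebook_pmf PU M)
           (\<lambda>c. (empirical_mean M a c - measure_pmf.expectation PU a)\<^sup>2)
         = (measure_pmf.expectation PU (\<lambda>u. (a u)\<^sup>2) - (measure_pmf.expectation PU a)\<^sup>2) / real M"
proof -
  define C where "C = codebook_pmf PU M"
  have bounded: "\<bar>a u\<bar> \<le> B" for u
    using assms(2,3) by (simp add: abs_of_nonneg)
  have mean_bounded: "\<bar>empirical_mean M a c\<bar> \<le> B" for c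
    using assms(1) bounded by (rule empirical_mean_bounded)
  have int_mean: "integrable (measure_pmf C) (empirical_mean M a)"
    using mean_bounded by (rule integrable_pmf_bounded)
  have "\<bar>(empirical_mean M a c)\<^sup>2\<bar> \<le> B\<^sup>2" for c
    using power_mono[OF mean_bounded abs_ge_zero, of c 2] by simp
  hence int_sq: "integrable (measure_pmf C) (\<lambda>c. (empirical_mean M a c)\<^sup>2)"
    by (rule integrable_pmf_bounded)
  have mean: "measure_pmf.expectation C (empirical_mean M a) = measure_pmf.expectation PU a"
    unfolding C_def using assms(1) bounded by (intro expectation_empirical_mean integrable_pmf_bounded)
  have "measure_pmf.expectation C (\<lambda>c. (empirical_mean M a c - measure_pmf.expectation PU a)\<^sup>2)
        = measure_pmf.expectation C (\<lambda>c. (empirical_mean M a c)\<^sup>2) - (measure_pmf.expectation PU a)\<^sup>2"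
    using measure_pmf.variance_eq[OF int_mean int_sq] unfolding mean .
  also have "\<dots> = (measure_pmf.expectation PU (\<lambda>u. (a u)\<^sup>2) - (measure_pmf.expectation PU a)\<^sup>2) / real M"
    unfolding C_def using assms(1) by (simp add: second_moment_empirical_mean[OF assms] field_simps)
  finally show ?thesis unfolding C_def .
qed

(* For a statistic split as a + b with a, b in [0, B], the expected
   deviation of the empirical mean from its mean is at most sqrt (E a^2 / M) + 2 E b:
   the part a is controlled by its variance, the part b crudely by the triangle inequality. *)
lemma empirical_mean_deviation:
  fixes a b :: "'u \<Rightarrow> real"
  assumes M: "M \<ge> 1"
    and a: "\<And>u. 0 \<le> a u" "\<And>u. a u \<le> B" and b: "\<And>u. 0 \<le> b u" "\<And>u. b u \<le> B"
  shows "measure_pmf.expectation (codebook_pmf PU M)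
           (\<lambda>c. \<bar>empirical_mean M (\<lambda>u. a u + b u) c
                 - (measure_pmf.expectation PU a + measure_pmf.expectation PU b)\<bar>)
         \<le> sqrt (measure_pmf.expectation PU (\<lambda>u. (a u)\<^sup>2) / real M) + 2 * measure_pmf.expectation PU b"
proof -
  define C where "C = codebook_pmf PU M"
  define \<mu> where "\<mu> = measure_pmf.expectation PU a"
  define \<nu> where "\<nu> = measure_pmf.expectation PU b"
  have a_bounded: "\<bar>a u\<bar> \<le> B" and b_bounded: "\<bar>b u\<bar> \<le> B" for u
    using a b by (simp_all add: abs_of_nonneg)
  have mean_a: "\<bar>empirical_mean M a c\<bar> \<le> B" and mean_b: "\<bar>empirical_mean M b c\<bar> \<le> B" for c
    using M a_bounded b_bounded by (simp_all add: empirical_mean_bounded)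
  have mean_b_nonneg: "0 \<le> empirical_mean M b c" for c
    using b(1) by (simp add: empirical_mean_def sum_nonneg)
  have \<nu>_nonneg: "0 \<le> \<nu>"
    unfolding \<nu>_def using b(1) by simp
  have pointwise:
    "\<bar>empirical_mean M (\<lambda>u. a u + b u) c - (\<mu> + \<nu>)\<bar> \<le> \<bar>empirical_mean M a c - \<mu>\<bar> + empirical_mean M b c + \<nu>" for c
    using mean_b_nonneg[of c] \<nu>_nonneg by (simp add: empirical_mean_add split: abs_split)
  have dev_bounded: "\<bar>empirical_mean M a c - \<mu>\<bar> \<le> B + \<bar>\<mu>\<bar>" for c
    using abs_triangle_ineq4[of "empirical_mean M a c" \<mu>] mean_a[of c] by linarith
  have int_dev: "integrable (measure_pmf C) (\<lambda>c. empirical_mean M a c - \<mu>)"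
    using dev_bounded by (rule integrable_pmf_bounded)
  have int_abs_dev: "integrable (measure_pmf C) (\<lambda>c. \<bar>empirical_mean M a c - \<mu>\<bar>)"
    using dev_bounded by (intro integrable_pmf_bounded) simp
  have int_dev_sq: "integrable (measure_pmf C) (\<lambda>c. (empirical_mean M a c - \<mu>)\<^sup>2)"
  proof (rule integrable_pmf_bounded)
    show "\<bar>(empirical_mean M a c - \<mu>)\<^sup>2\<bar> \<le> (B + \<bar>\<mu>\<bar>)\<^sup>2" for c
      using power_mono[OF dev_bounded abs_ge_zero, of c 2] by simp
  qed
  have int_mean_b: "integrable (measure_pmf C) (empirical_mean M b)"
    using mean_b by (rule integrable_pmf_bounded)
  have expectation_mean_b: "measure_pmf.expectation C (empirical_mean M b) = \<nu>"
    unfolding C_def \<nu>_def using M b_bounded by (intro expectation_empirical_mean integrable_pmf_bounded)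
  have int_lhs: "integrable (measure_pmf C) (\<lambda>c. \<bar>empirical_mean M (\<lambda>u. a u + b u) c - (\<mu> + \<nu>)\<bar>)"
  proof (rule integrable_pmf_bounded)
    show "\<bar>\<bar>empirical_mean M (\<lambda>u. a u + b u) c - (\<mu> + \<nu>)\<bar>\<bar> \<le> 2 * B + \<bar>\<mu>\<bar> + \<nu>" for c
      using pointwise[of c] dev_bounded[of c] mean_b[of c] by simp
  qed
  have "measure_pmf.expectation C (\<lambda>c. \<bar>empirical_mean M (\<lambda>u. a u + b u) c - (\<mu> + \<nu>)\<bar>)
        \<le> measure_pmf.expectation C (\<lambda>c. \<bar>empirical_mean M a c - \<mu>\<bar> + empirical_mean M b c + \<nu>)"
    using int_lhs int_abs_dev int_mean_b pointwise by (intro integral_mono) auto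
  also have "\<dots> = measure_pmf.expectation C (\<lambda>c. \<bar>empirical_mean M a c - \<mu>\<bar>) + \<nu> + \<nu>"
    using int_abs_dev int_mean_b expectation_mean_b by simp
  also have "measure_pmf.expectation C (\<lambda>c. \<bar>empirical_mean M a c - \<mu>\<bar>)
             \<le> sqrt (measure_pmf.expectation C (\<lambda>c. (empirical_mean M a c - \<mu>)\<^sup>2))"
    using int_dev int_dev_sq by (rule expectation_abs_le_sqrt_second_moment)
  also have "measure_pmf.expectation C (\<lambda>c. (empirical_mean M a c - \<mu>)\<^sup>2)
             = (measure_pmf.expectation PU (\<lambda>u. (a u)\<^sup>2) - \<mu>\<^sup>2) / real M"
    unfolding C_def \<mu>_def using M a by (rule variance_empirical_mean)
  also have "\<dots> \<le> measure_pmf.expectation PU (\<lambda>u. (a u)\<^sup>2) / real M"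
    using M by (simp add: divide_right_mono)
  finally show ?thesis
    unfolding C_def \<mu>_def \<nu>_def by (simp add: real_sqrt_le_mono)
qed

lemma pmf_joint_pmf: "pmf (joint_pmf PU W) (u, v) = pmf PU u * pmf (W u) v"
proof -
  have "pmf (map_pmf (\<lambda>v. (x, v)) (W x)) (u, v) = indicator {u} x * pmf (W u) v" for x
  proof (cases "x = u")
    case True
    thus ?thesis using pmf_map_inj'[of "\<lambda>v. (u, v)" "W u" v] by (simp add: inj_def)
  next
    case False
    thus ?thesis by (auto simp: pmf_eq_0_set_pmf)
  qed
  hence "pmf (joint_pmf PU W) (u, v) = measure_pmf.expectation PU (\<lambda>x. indicator {u} x * pmf (W u) v)"
    unfolding joint_pmf_def pmf_bind by simp
  also have "\<dots> = pmf PU u * pmf (W u) v"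
    by (subst integral_measure_pmf_real[where A = "{u}"]) (auto simp: indicator_def split: if_splits)
  finally show ?thesis .
qed

lemma pmf_out_pmf: "pmf (out_pmf PU W) v = measure_pmf.expectation PU (\<lambda>u. pmf (W u) v)"
  unfolding out_pmf_def pmf_bind ..

lemma has_sum_out_pmf: "((\<lambda>u. pmf PU u * pmf (W u) v) has_sum pmf (out_pmf PU W) v) UNIV"
  unfolding pmf_out_pmf
  by (intro has_sum_pmf_expectation integrable_pmf_bounded[where B = 1]) (simp add: pmf_le_1)

lemma out_pmf_pos:
  assumes "pmf PU u * pmf (W u) v \<noteq> 0"
  shows "pmf (out_pmf PU W) v > 0"
proof -
  have "u \<in> set_pmf PU" "v \<in> set_pmf (W u)" using assms by (auto simp: set_pmf_iff)
  hence "v \<in> set_pmf (out_pmf PU W)" unfolding out_pmf_def by auto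
  thus ?thesis by (simp add: pmf_positive)
qed

lemma exp2_info_dens:
  assumes "pmf PU u * pmf (W u) v \<noteq> 0"
  shows "2 powr info_dens PU W u v = pmf (W u) v / pmf (out_pmf PU W) v"
proof -
  have "pmf PU u > 0" "pmf (W u) v > 0"
    using assms by (simp_all add: order.not_eq_order_implies_strict)
  thus ?thesis
    using out_pmf_pos[where W = W, OF assms] unfolding info_dens_def pmf_joint_pmf by (subst powr_log_cancel) auto
qed

lemma out_pmf_split:
  "pmf (out_pmf PU W) v = measure_pmf.expectation PU (\<lambda>u. pmf (W u) v * indicator S (u, v))
                          + measure_pmf.expectation PU (\<lambda>u. pmf (W u) v * indicator (- S) (u, v))"
proof -
  have integrable: "integrable (measure_pmf PU) (\<lambda>u. pmf (W u) v * indicator T (u, v))" for T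
    by (rule integrable_pmf_bounded[where B = 1]) (simp add: indicator_def pmf_le_1)
  have "pmf (out_pmf PU W) v = measure_pmf.expectation PU
          (\<lambda>u. pmf (W u) v * indicator S (u, v) + pmf (W u) v * indicator (- S) (u, v))"
    unfolding pmf_out_pmf by (intro Bochner_Integration.integral_cong) (auto simp: indicator_def)
  thus ?thesis using integrable by simp
qed

lemma second_moment_typical_part:
  "measure_pmf.expectation PU (\<lambda>u. (pmf (W u) v * indicator (A_tau PU W \<tau>) (u, v))\<^sup>2)
     = (pmf (out_pmf PU W) v)\<^sup>2 * cond_term PU W \<tau> v"
proof -
  define A where "A = A_tau PU W \<tau>"
  define q where "q = pmf (out_pmf PU W) v"
  define t where "t = (\<lambda>u. (pmf (joint_pmf PU W) (u, v) / q) * 2 powr (info_dens PU W u v) * indicator A (u, v))"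
  have pointwise: "pmf PU u * (pmf (W u) v * indicator A (u, v))\<^sup>2 = q\<^sup>2 * t u" for u
  proof (cases "pmf PU u * pmf (W u) v = 0")
    case True
    thus ?thesis unfolding t_def by (auto simp: pmf_joint_pmf power2_eq_square)
  next
    case False
    have "q > 0" unfolding q_def using False by (rule out_pmf_pos)
    thus ?thesis
      using False unfolding t_def pmf_joint_pmf exp2_info_dens[where W = W, OF False] q_def[symmetric]
      by (simp add: indicator_def power2_eq_square field_simps)
  qed
  have "((\<lambda>u. pmf PU u * (pmf (W u) v * indicator A (u, v))\<^sup>2) has_sum
           measure_pmf.expectation PU (\<lambda>u. (pmf (W u) v * indicator A (u, v))\<^sup>2)) UNIV"
    by (intro has_sum_pmf_expectation integrable_pmf_bounded[where B = 1])
       (simp add: indicator_def pmf_le_1 power_le_one)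
  hence "measure_pmf.expectation PU (\<lambda>u. (pmf (W u) v * indicator A (u, v))\<^sup>2) = (\<Sum>\<^sub>\<infinity>u. q\<^sup>2 * t u)"
    unfolding pointwise by (simp add: infsumI)
  also have "\<dots> = q\<^sup>2 * cond_term PU W \<tau> v"
    unfolding infsum_cmult_right' cond_term_def t_def q_def A_def ..
  finally show ?thesis unfolding A_def q_def .
qed

lemma has_sum_prob_joint:
  fixes W :: "'u \<Rightarrow> 'v::countable pmf"
  shows "((\<lambda>v. measure_pmf.expectation PU (\<lambda>u. pmf (W u) v * indicator S (u, v)))
           has_sum measure_pmf.prob (joint_pmf PU W) S) UNIV"
proof -
  define f where "f = (\<lambda>u v. pmf (W u) v * indicator S (u, v))"
  have integrable: "integrable (measure_pmf PU) (\<lambda>u. f u v)" for v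
    unfolding f_def by (rule integrable_pmf_bounded[where B = 1]) (simp add: indicator_def pmf_le_1)
  have "(\<integral>\<^sup>+v. ennreal (measure_pmf.expectation PU (\<lambda>u. f u v)) \<partial>count_space UNIV)
        = (\<integral>\<^sup>+v. \<integral>\<^sup>+u. ennreal (f u v) \<partial>PU \<partial>count_space UNIV)"
    using integrable by (intro nn_integral_cong nn_integral_eq_integral[symmetric]) (auto simp: f_def)
  also have "\<dots> = (\<integral>\<^sup>+u. \<integral>\<^sup>+v. ennreal (f u v) \<partial>count_space UNIV \<partial>PU)"
    by (rule nn_integral_count_space_nn_integral[symmetric]) auto
  also have "\<dots> = (\<integral>\<^sup>+u. emeasure (measure_pmf (W u)) {v. (u, v) \<in> S} \<partial>PU)"
  proof (rule nn_integral_cong)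
    fix u
    have "(\<integral>\<^sup>+v. ennreal (f u v) \<partial>count_space UNIV)
          = (\<integral>\<^sup>+v. ennreal (pmf (W u) v) * indicator {v. (u, v) \<in> S} v \<partial>count_space UNIV)"
      unfolding f_def by (intro nn_integral_cong) (auto simp: indicator_def)
    also have "\<dots> = (\<integral>\<^sup>+v. indicator {v. (u, v) \<in> S} v \<partial>measure_pmf (W u))"
      by (simp add: nn_integral_measure_pmf)
    finally show "(\<integral>\<^sup>+v. ennreal (f u v) \<partial>count_space UNIV) = emeasure (measure_pmf (W u)) {v. (u, v) \<in> S}"
      by simp
  qed
  also have "\<dots> = emeasure (measure_pmf (joint_pmf PU W)) S"
    unfolding joint_pmf_def by (simp add: vimage_def)
  also have "\<dots> = ennreal (measure_pmf.prob (joint_pmf PU W) S)"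
    by (rule measure_pmf.emeasure_eq_measure)
  finally show ?thesis
    unfolding f_def by (simp add: has_sum_nonneg_iff_nn_integral)
qed

(* The conditional term lies in [0, 2^tau], because 2^{i(u;v)} <= 2^tau on A'_tau and the
   weights Phi_{U|V}(.|v) have total mass at most 1. *)
lemma cond_term_bounds: "0 \<le> cond_term PU W \<tau> v \<and> cond_term PU W \<tau> v \<le> 2 powr \<tau>"
proof -
  define q where "q = pmf (out_pmf PU W) v"
  define t where "t = (\<lambda>u. (pmf (joint_pmf PU W) (u, v) / q)
                        * 2 powr (info_dens PU W u v) * indicator (A_tau PU W \<tau>) (u, v))"
  have t_nonneg: "0 \<le> t u" for u
    unfolding t_def q_def by simp
  have t_le: "t u \<le> (2 powr \<tau> / q) * (pmf PU u * pmf (W u) v)" for u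
  proof (cases "(u, v) \<in> A_tau PU W \<tau>")
    case True
    hence "2 powr info_dens PU W u v \<le> 2 powr \<tau>" by (simp add: A_tau_def)
    thus ?thesis
      unfolding t_def pmf_joint_pmf q_def using True
      by (simp add: mult_left_mono divide_right_mono field_simps)
  next
    case False
    thus ?thesis unfolding t_def q_def by simp
  qed
  have dominating: "((\<lambda>u. (2 powr \<tau> / q) * (pmf PU u * pmf (W u) v)) has_sum (2 powr \<tau> / q) * q) UNIV"
    unfolding q_def by (intro has_sum_cmult_right has_sum_out_pmf)
  have "(\<Sum>\<^sub>\<infinity>u. t u) \<le> (2 powr \<tau> / q) * q"
  proof (cases "t summable_on UNIV")
    case True
    thus ?thesis using dominating t_le by (intro has_sum_mono[OF has_sum_infsum]) auto
  next
    case False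
    thus ?thesis by (simp add: infsum_not_exists q_def)
  qed
  also have "\<dots> \<le> 2 powr \<tau>"
    by (cases "q = 0") auto
  finally show ?thesis
    unfolding cond_term_def t_def[symmetric] q_def[symmetric] using t_nonneg by (simp add: infsum_nonneg)
qed

lemma delta'_bound: "delta' PU W M \<tau> \<le> (1/2) * sqrt (2 powr \<tau> / real M)"
proof -
  have "measure_pmf.expectation (out_pmf PU W) (\<lambda>v. sqrt (cond_term PU W \<tau> v)) \<le> sqrt (2 powr \<tau>)"
    using cond_term_bounds[of PU W \<tau>]
    by (intro measure_pmf.integral_le_const integrable_pmf_bounded[where B = "sqrt (2 powr \<tau>)"]) auto
  hence "delta' PU W M \<tau> \<le> 1 / (2 * sqrt (real M)) * sqrt (2 powr \<tau>)"
    unfolding delta'_def by (intro mult_left_mono) auto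
  also have "\<dots> = (1/2) * sqrt (2 powr \<tau> / real M)"
    by (simp add: real_sqrt_divide)
  finally show ?thesis .
qed

lemma integrable_deviation_at_output:
  assumes "M \<ge> 1"
  shows "integrable (measure_pmf (codebook_pmf PU M)) (\<lambda>c. \<bar>induced_out W M c v - pmf Q v\<bar>)"
proof (rule integrable_pmf_bounded)
  fix c
  have "\<bar>induced_out W M c v\<bar> \<le> 1"
    unfolding induced_out_def using empirical_mean_bounded[OF assms, of "\<lambda>u. pmf (W u) v" 1]
    by (simp add: empirical_mean_def pmf_le_1)
  thus "\<bar>\<bar>induced_out W M c v - pmf Q v\<bar>\<bar> \<le> 2"
    using abs_triangle_ineq4[of "induced_out W M c v" "pmf Q v"] pmf_le_1[of Q v] by simp
qed

lemma expected_deviation_at_output: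
  assumes M: "M \<ge> 1"
  shows "measure_pmf.expectation (codebook_pmf PU M) (\<lambda>c. \<bar>induced_out W M c v - pmf (out_pmf PU W) v\<bar>)
         \<le> (1 / sqrt (real M)) * (pmf (out_pmf PU W) v * sqrt (cond_term PU W \<tau> v))
           + 2 * measure_pmf.expectation PU (\<lambda>u. pmf (W u) v * indicator (- A_tau PU W \<tau>) (u, v))"
proof -
  define A where "A = A_tau PU W \<tau>"
  define a where "a = (\<lambda>u. pmf (W u) v * indicator A (u, v))"
  define b where "b = (\<lambda>u. pmf (W u) v * indicator (- A) (u, v))"
  have "a u + b u = pmf (W u) v" for u
    unfolding a_def b_def by (auto simp: indicator_def)
  hence "induced_out W M c v = empirical_mean M (\<lambda>u. a u + b u) c" for c
    unfolding induced_out_def empirical_mean_def by simp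
  moreover have "pmf (out_pmf PU W) v = measure_pmf.expectation PU a + measure_pmf.expectation PU b"
    unfolding a_def b_def by (rule out_pmf_split)
  ultimately have "measure_pmf.expectation (codebook_pmf PU M) (\<lambda>c. \<bar>induced_out W M c v - pmf (out_pmf PU W) v\<bar>)
        \<le> sqrt (measure_pmf.expectation PU (\<lambda>u. (a u)\<^sup>2) / real M) + 2 * measure_pmf.expectation PU b"
    using M by (simp add: empirical_mean_deviation[where B = 1] a_def b_def indicator_def pmf_le_1)
  also have "measure_pmf.expectation PU (\<lambda>u. (a u)\<^sup>2) = (pmf (out_pmf PU W) v)\<^sup>2 * cond_term PU W \<tau> v"
    unfolding a_def A_def by (rule second_moment_typical_part)
  also have "sqrt ((pmf (out_pmf PU W) v)\<^sup>2 * cond_term PU W \<tau> v / real M)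
             = (1 / sqrt (real M)) * (pmf (out_pmf PU W) v * sqrt (cond_term PU W \<tau> v))"
    by (simp add: real_sqrt_divide real_sqrt_mult)
  finally show ?thesis unfolding b_def A_def .
qed

theorem mainTheorem10:
  fixes PU :: "'u::countable pmf" and W :: "'u \<Rightarrow> 'v::countable pmf" and M :: nat and \<tau> :: real
  assumes "M \<ge> 1"
  shows "measure_pmf.expectation (codebook_pmf PU M)
           (\<lambda>c. tv_dist (induced_out W M c) (pmf (out_pmf PU W)))
         \<le> measure_pmf.prob (joint_pmf PU W) (- A_tau PU W \<tau>) + delta' PU W M \<tau>
       \<and> delta' PU W M \<tau> \<le> (1/2) * sqrt (2 powr \<tau> / real M)"
proof -
  define Q where "Q = out_pmf PU W"
  define p where "p = measure_pmf.prob (joint_pmf PU W) (- A_tau PU W \<tau>)"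
  define E where "E = measure_pmf.expectation Q (\<lambda>v. sqrt (cond_term PU W \<tau> v))"
  define b where "b = (\<lambda>v u. pmf (W u) v * indicator (- A_tau PU W \<tau>) (u, v))"
  define dev where "dev = (\<lambda>c v. \<bar>induced_out W M c v - pmf Q v\<bar>)"
  define h where "h = (\<lambda>v. (1 / sqrt (real M)) * (pmf Q v * sqrt (cond_term PU W \<tau> v))
                           + 2 * measure_pmf.expectation PU (b v))"
  have "(h has_sum (1 / sqrt (real M)) * E + 2 * p) UNIV"
    unfolding h_def E_def p_def b_def using cond_term_bounds[of PU W \<tau>]
    by (intro has_sum_add has_sum_cmult_right has_sum_prob_joint has_sum_pmf_expectation
          integrable_pmf_bounded[where B = "sqrt (2 powr \<tau>)"]) auto
  moreover have "measure_pmf.expectation (codebook_pmf PU M) (\<lambda>c. dev c v) \<le> h v" for v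
    unfolding dev_def h_def Q_def b_def using assms by (rule expected_deviation_at_output)
  ultimately have "measure_pmf.expectation (codebook_pmf PU M) (\<lambda>c. \<Sum>\<^sub>\<infinity>v. dev c v)
                   \<le> (1 / sqrt (real M)) * E + 2 * p"
    unfolding dev_def Q_def using assms by (intro expectation_infsum_le integrable_deviation_at_output) auto
  moreover have "delta' PU W M \<tau> = (1 / sqrt (real M)) * E / 2"
    unfolding delta'_def E_def Q_def by simp
  ultimately have "measure_pmf.expectation (codebook_pmf PU M)
                     (\<lambda>c. tv_dist (induced_out W M c) (pmf (out_pmf PU W))) \<le> p + delta' PU W M \<tau>"
    unfolding tv_dist_def dev_def Q_def by simp
  thus ?thesis
    unfolding p_def using delta'_bound by simp
qed

end
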